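(* Let $m$ be an odd positive integer, let $\tilde H\in\Omega_{2n}$ be invertible and Hermitian, and let $\tilde B\in\Omega_{2n}$ be $\tilde H$-selfadjoint with $\sigma(\tilde B)\subset(-\infty,0)$. Then there exists an $\tilde H$-selfadjoint $\tilde A\in\Omega_{2n}$ such that $\tilde A^m=\tilde B$.
   Context: $\Omega_{2n}=\{\begin{bmatrix}A_1&\bar A_2\\-A_2&\bar A_1\end{bmatrix}: A_1,A_2\in\mathbb{C}^{n\times n}\}\subset\mathbb{C}^{2n\times 2n}$. For an invertible Hermitian $H$, $A$ is $H$-selfadjoint if $HA=A^*H$. $\sigma(\cdot)$ denotes the spectrum. *)

theory Defs
  imports "Jordan_Normal_Form.Spectral_Radius" "Jordan_Normal_Form.Schur_Decomposition"
begin

definition Omega :: "nat \<Rightarrow> complex mat set" where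
  "Omega n = {M. M \<in> carrier_mat (2*n) (2*n) \<and>
     (\<exists>A1 A2. A1 \<in> carrier_mat n n \<and> A2 \<in> carrier_mat n n \<and>
        M = four_block_mat A1 (map_mat cnj A2) (- A2) (map_mat cnj A1))}"

definition hermitian_mat :: "complex mat \<Rightarrow> bool" where
  "hermitian_mat H \<longleftrightarrow> mat_adjoint H = H"

definition H_selfadjoint :: "complex mat \<Rightarrow> complex mat \<Rightarrow> bool" where
  "H_selfadjoint H A \<longleftrightarrow> H * A = mat_adjoint A * H"

end

theory Submission
  imports Defs
begin

text \<open>Since \<open>m\<close> is odd and the eigenvalues of \<open>B\<close> are real and nonzero, there is a real
  polynomial \<open>p\<close> with \<open>p ^ m \<equiv> x\<close> modulo \<open>r ^ 2n\<close>, where \<open>r\<close> is the product of the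
  \<open>x - \<lambda>\<close> over the eigenvalues \<open>\<lambda>\<close>: interpolate the real \<open>m\<close>-th root on the eigenvalues and
  lift the congruence by Newton's method. The characteristic polynomial of \<open>B\<close> divides
  \<open>r ^ 2n\<close>, so by Cayley-Hamilton \<open>A = p(B)\<close> satisfies \<open>A ^ m = B\<close>. Because \<open>p\<close> has real
  coefficients, \<open>p(B)\<close> inherits from \<open>B\<close> both the relation \<open>B J = J (conj B)\<close> characterising
  \<open>\<Omega>\<^sub>2\<^sub>n\<close> and the relation \<open>H B = B\<^sup>* H\<close>.\<close>

section \<open>Roots of polynomials modulo powers\<close>

lemma poly_interpolation_exists:
  fixes f :: "'a::field \<Rightarrow> 'a"
  assumes "finite S"
  shows "\<exists>p. \<forall>x\<in>S. poly p x = f x"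
  using assms
proof (induction S rule: finite_induct)
  case empty
  then show ?case by auto
next
  case (insert a S)
  then obtain p where p: "\<forall>x\<in>S. poly p x = f x" by auto
  define q where "q = (\<Prod>x\<in>S. [:-x,1:])"
  have q_S: "poly q x = 0" if "x \<in> S" for x
    unfolding q_def poly_prod using insert(1) that by (auto intro!: prod_zero)
  have q_a: "poly q a \<noteq> 0"
    unfolding q_def poly_prod using insert(1,2) by (auto simp: prod_zero_iff)
  have "\<forall>x\<in>insert a S. poly (p + Polynomial.smult ((f a - poly p a) / poly q a) q) x = f x"
    using p q_S q_a by auto
  then show ?case by blast
qed

lemma prod_linear_dvd_if_roots:
  fixes q :: "'a::idom poly"
  assumes "finite S" "\<forall>x\<in>S. poly q x = 0"
  shows "(\<Prod>x\<in>S. [:-x,1:]) dvd q"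
  using assms
proof (induction S arbitrary: q rule: finite_induct)
  case empty
  then show ?case by auto
next
  case (insert a S)
  then obtain q' where q': "q = [:-a,1:] * q'"
    using poly_eq_0_iff_dvd by (metis dvdE insertI1)
  have "\<forall>x\<in>S. poly q' x = 0"
    using insert(2,4) unfolding q' by auto
  with insert(3) have "(\<Prod>x\<in>S. [:-x,1:]) dvd q'" .
  then show ?case
    unfolding q' using insert(1,2) by (simp add: mult_dvd_mono del: mult_pCons_left)
qed

lemma power_add_first_order:
  fixes a b :: "'a::comm_ring_1"
  shows "\<exists>c. (a + b) ^ Suc k = a ^ Suc k + of_nat (Suc k) * a ^ k * b + b\<^sup>2 * c"
proof (induction k)
  case 0
  show ?case by (rule exI[of _ 0]) simp
next
  case (Suc k)
  then obtain c where "(a + b) ^ Suc k = a ^ Suc k + of_nat (Suc k) * a ^ k * b + b\<^sup>2 * c"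
    by blast
  then have "(a + b) ^ Suc (Suc k) = a ^ Suc (Suc k) + of_nat (Suc (Suc k)) * a ^ Suc k * b
     + b\<^sup>2 * (a * c + of_nat (Suc k) * a ^ k + b * c)"
    by (simp add: algebra_simps power2_eq_square)
  then show ?case by blast
qed

text \<open>One Newton step for the equation \<open>p ^ m = a\<close>: if \<open>u\<close> inverts \<open>p ^ (m - 1)\<close>
  modulo \<open>r\<close>, the correction \<open>-(u / m) (p ^ m - a)\<close> raises the order of contact with \<open>r\<close> by one.\<close>

lemma newton_step_power_root:
  fixes r p u s a :: "'a::field_char_0 poly"
  assumes u: "r dvd u * p ^ k - 1"
    and s: "p ^ Suc k - a = r ^ Suc j * s"
  shows "\<exists>p'. r ^ Suc (Suc j) dvd p' ^ Suc k - a"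
proof -
  define D where "D = p ^ Suc k - a"
  define e where "e = Polynomial.smult (- 1 / of_nat (Suc k)) (u * D)"
  obtain c where c: "(p + e) ^ Suc k = p ^ Suc k + of_nat (Suc k) * p ^ k * e + e\<^sup>2 * c"
    using power_add_first_order by blast
  have "of_nat (Suc k) * p ^ k * e = - (u * p ^ k) * D"
    unfolding e_def by (simp add: of_nat_poly algebra_simps del: of_nat_Suc)
  then have expand: "(p + e) ^ Suc k - a = D * (1 - u * p ^ k) + e\<^sup>2 * c"
    unfolding c D_def by (simp add: algebra_simps)
  have "r ^ Suc j * r dvd D * (1 - u * p ^ k)"
    using s u unfolding D_def by (intro mult_dvd_mono) (auto simp: dvd_diff_commute)
  moreover have "r ^ Suc (Suc j) dvd e\<^sup>2"
  proof -
    have "r ^ Suc j dvd e"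
      using s unfolding e_def D_def by (simp add: dvd_smult)
    then have "r ^ Suc j * r ^ Suc j dvd e\<^sup>2"
      by (simp add: power2_eq_square mult_dvd_mono)
    moreover have "r ^ Suc (Suc j) dvd r ^ Suc j * r ^ Suc j"
      by (simp add: le_imp_power_dvd flip: power_add)
    ultimately show ?thesis by (rule dvd_trans[rotated])
  qed
  ultimately have "r ^ Suc (Suc j) dvd (p + e) ^ Suc k - a"
    unfolding expand by (simp add: dvd_add dvd_mult2 mult.commute)
  then show ?thesis by blast
qed

lemma X_invertible_mod:
  fixes r :: "'a::field poly"
  assumes "poly r 0 \<noteq> 0"
  shows "\<exists>w. r dvd [:0,1:] * w - 1"
proof -
  obtain a t where r: "r = pCons a t"
    by (cases r)
  then have "a \<noteq> 0"
    using assms by simp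
  then have "[:0,1:] * Polynomial.smult (- 1 / a) t - 1 = Polynomial.smult (- 1 / a) r"
    unfolding r by (simp add: one_pCons)
  then show ?thesis
    by (metis dvd_smult dvd_refl)
qed

lemma power_root_lift_mod_power:
  fixes r p :: "'a::field_char_0 poly"
  assumes r0: "poly r 0 \<noteq> 0" and p: "r dvd p ^ Suc k - [:0,1:]"
  shows "\<exists>q. r ^ j dvd q ^ Suc k - [:0,1:]"
proof -
  obtain w where w: "r dvd [:0,1:] * w - 1"
    using X_invertible_mod[OF r0] by blast
  have "\<exists>q. r ^ Suc i dvd q ^ Suc k - [:0,1:]" for i
  proof (induction i)
    case 0
    then show ?case using p by auto
  next
    case (Suc i)
    then obtain q s where s: "q ^ Suc k - [:0,1:] = r ^ Suc i * s"
      by (auto elim: dvdE)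
    have "(w * q) * q ^ k - 1 = w * (q ^ Suc k - [:0,1:]) + ([:0,1:] * w - 1)"
      by (simp add: algebra_simps)
    moreover have "r dvd w * (q ^ Suc k - [:0,1:])"
      unfolding s by simp
    ultimately have "r dvd (w * q) * q ^ k - 1"
      using w by (metis dvd_add)
    from newton_step_power_root[OF this s] show ?case .
  qed
  then show ?thesis
    by (cases j) auto
qed

lemma real_poly_power_root_mod_power:
  fixes S :: "real set"
  assumes "finite S" "0 \<notin> S" "odd m"
  shows "\<exists>p. (\<Prod>x\<in>S. [:-x,1:]) ^ j dvd p ^ m - [:0,1:]"
proof -
  obtain k where m: "m = Suc k"
    using \<open>odd m\<close> by (cases m) auto
  obtain p where p: "\<forall>x\<in>S. poly p x = root m x"
    using poly_interpolation_exists[OF assms(1)] by blast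
  have "\<forall>x\<in>S. poly (p ^ m - [:0,1:]) x = 0"
    using p odd_real_root_pow[OF assms(3)] by simp
  then have "(\<Prod>x\<in>S. [:-x,1:]) dvd p ^ Suc k - [:0,1:]"
    unfolding m by (rule prod_linear_dvd_if_roots[OF assms(1)])
  moreover have "poly (\<Prod>x\<in>S. [:-x,1:]) 0 \<noteq> 0"
    using assms(1,2) by (auto simp: poly_prod prod_zero_iff)
  ultimately show ?thesis
    unfolding m by (intro power_root_lift_mod_power)
qed

section \<open>Polynomials evaluated at square matrices\<close>

definition poly_mat :: "'a::comm_ring_1 poly \<Rightarrow> 'a mat \<Rightarrow> 'a mat" where
  "poly_mat p M = foldr (\<lambda>a N. a \<cdot>\<^sub>m 1\<^sub>m (dim_row M) + M * N) (coeffs p)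
     (0\<^sub>m (dim_row M) (dim_row M))"

lemma poly_mat_0 [simp]: "M \<in> carrier_mat n n \<Longrightarrow> poly_mat 0 M = 0\<^sub>m n n"
  unfolding poly_mat_def by simp

lemma poly_mat_pCons:
  assumes M: "M \<in> carrier_mat n n"
  shows "poly_mat (pCons a p) M = a \<cdot>\<^sub>m 1\<^sub>m n + M * poly_mat p M"
proof (cases "p = 0 \<and> a = 0")
  case True
  then show ?thesis
    using M by (auto intro!: eq_matI)
next
  case False
  then have "coeffs (pCons a p) = a # coeffs p"
    by (auto simp: cCons_def)
  then show ?thesis
    using M unfolding poly_mat_def by simp
qed

lemma poly_mat_carrier [simp]: "M \<in> carrier_mat n n \<Longrightarrow> poly_mat p M \<in> carrier_mat n n"
  by (induction p) (auto simp: poly_mat_pCons)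

lemma poly_mat_dim [simp]:
  assumes "M \<in> carrier_mat n n"
  shows "dim_row (poly_mat p M) = n" "dim_col (poly_mat p M) = n"
  using poly_mat_carrier[OF assms] by auto

lemma poly_mat_add:
  assumes M: "M \<in> carrier_mat n n"
  shows "poly_mat (p + q) M = poly_mat p M + poly_mat q M"
proof (induction p q rule: poly_induct2)
  case 0
  then show ?case using M by simp
next
  case (pCons a p b q)
  define P Q where "P = poly_mat p M" and "Q = poly_mat q M"
  have PQ: "P \<in> carrier_mat n n" "Q \<in> carrier_mat n n"
    using M unfolding P_def Q_def by auto
  have "poly_mat (pCons a p + pCons b q) M = (a + b) \<cdot>\<^sub>m 1\<^sub>m n + M * (P + Q)"
    using pCons by (simp add: poly_mat_pCons[OF M] P_def Q_def)
  also have "M * (P + Q) = M * P + M * Q"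
    by (rule mult_add_distrib_mat[OF M PQ])
  also have "(a + b) \<cdot>\<^sub>m 1\<^sub>m n + (M * P + M * Q) = (a \<cdot>\<^sub>m 1\<^sub>m n + M * P) + (b \<cdot>\<^sub>m 1\<^sub>m n + M * Q)"
    using M PQ by (intro eq_matI) (auto simp: algebra_simps)
  finally show ?case
    by (simp add: poly_mat_pCons[OF M] P_def Q_def)
qed

lemma poly_mat_smult:
  assumes M: "M \<in> carrier_mat n n"
  shows "poly_mat (Polynomial.smult c p) M = c \<cdot>\<^sub>m poly_mat p M"
proof (induction p)
  case 0
  then show ?case using M by (auto intro!: eq_matI)
next
  case (pCons a p)
  define P where "P = poly_mat p M"
  have P: "P \<in> carrier_mat n n"
    using M unfolding P_def by auto
  have "poly_mat (Polynomial.smult c (pCons a p)) M = (c * a) \<cdot>\<^sub>m 1\<^sub>m n + M * (c \<cdot>\<^sub>m P)"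
    using pCons by (simp add: poly_mat_pCons[OF M] P_def)
  also have "M * (c \<cdot>\<^sub>m P) = c \<cdot>\<^sub>m (M * P)"
    by (rule mult_smult_distrib[OF M P])
  also have "(c * a) \<cdot>\<^sub>m 1\<^sub>m n + c \<cdot>\<^sub>m (M * P) = c \<cdot>\<^sub>m (a \<cdot>\<^sub>m 1\<^sub>m n + M * P)"
    using M P by (intro eq_matI) (auto simp: algebra_simps)
  finally show ?case
    by (simp add: poly_mat_pCons[OF M] P_def)
qed

lemma poly_mat_mult:
  assumes M: "M \<in> carrier_mat n n"
  shows "poly_mat (p * q) M = poly_mat p M * poly_mat q M"
proof (induction p)
  case 0
  then show ?case using M by simp
next
  case (pCons a p)
  define P Q where "P = poly_mat p M" and "Q = poly_mat q M"
  have PQ: "P \<in> carrier_mat n n" "Q \<in> carrier_mat n n"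
    using M unfolding P_def Q_def by auto
  have "poly_mat (pCons a p * q) M = a \<cdot>\<^sub>m Q + (0 \<cdot>\<^sub>m 1\<^sub>m n + M * (P * Q))"
    using pCons by (simp add: poly_mat_add[OF M] poly_mat_smult[OF M] poly_mat_pCons[OF M] P_def Q_def)
  also have "\<dots> = (a \<cdot>\<^sub>m 1\<^sub>m n) * Q + (M * P) * Q"
  proof -
    have "(a \<cdot>\<^sub>m 1\<^sub>m n) * Q = a \<cdot>\<^sub>m Q"
      using PQ by (simp add: mult_smult_assoc_mat[of _ n n Q n])
    moreover have "(M * P) * Q = M * (P * Q)"
      using M PQ by (rule assoc_mult_mat)
    ultimately show ?thesis
      using M PQ by (auto intro!: eq_matI)
  qed
  also have "\<dots> = (a \<cdot>\<^sub>m 1\<^sub>m n + M * P) * Q"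
    using M PQ by (simp add: add_mult_distrib_mat[of _ n n])
  finally show ?case
    by (simp add: poly_mat_pCons[OF M] P_def Q_def)
qed

lemma poly_mat_1 [simp]:
  assumes M: "M \<in> carrier_mat n n"
  shows "poly_mat 1 M = 1\<^sub>m n"
proof -
  have "poly_mat [:1:] M = 1 \<cdot>\<^sub>m 1\<^sub>m n + M * 0\<^sub>m n n"
    using poly_mat_pCons[OF M, of 1 0] M by simp
  also have "\<dots> = 1\<^sub>m n"
    using M by (auto intro!: eq_matI)
  finally show ?thesis
    by (metis one_pCons)
qed

lemma poly_mat_linear: "M \<in> carrier_mat n n \<Longrightarrow> poly_mat [:c, 1:] M = c \<cdot>\<^sub>m 1\<^sub>m n + M"
  using poly_mat_pCons[of M n c "[:1:]"] poly_mat_1[of M n] by (simp add: one_pCons)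

lemma poly_mat_power:
  assumes M: "M \<in> carrier_mat n n"
  shows "poly_mat (p ^ k) M = poly_mat p M ^\<^sub>m k"
  by (induction k) (simp_all add: poly_mat_dim[OF M] poly_mat_mult[OF M] poly_mat_1[OF M] power_Suc2 del: power_Suc)

lemma poly_mat_dvd_eq_0:
  assumes M: "M \<in> carrier_mat n n" and p: "poly_mat p M = 0\<^sub>m n n" and "p dvd q"
  shows "poly_mat q M = 0\<^sub>m n n"
proof -
  obtain r where "q = p * r"
    using \<open>p dvd q\<close> by (rule dvdE)
  then show ?thesis
    using M by (simp add: poly_mat_mult[OF M] p)
qed

lemma poly_mat_intertwine:
  assumes X: "X \<in> carrier_mat n n" and M: "M \<in> carrier_mat n n" and N: "N \<in> carrier_mat n n"
    and XM: "X * M = N * X"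
  shows "X * poly_mat p M = poly_mat p N * X"
proof (induction p)
  case 0
  then show ?case using X M N by simp
next
  case (pCons a p)
  define P P' where "P = poly_mat p M" and "P' = poly_mat p N"
  have P: "P \<in> carrier_mat n n" "P' \<in> carrier_mat n n"
    using M N unfolding P_def P'_def by auto
  have IH: "X * P = P' * X"
    using pCons.IH unfolding P_def P'_def .
  have "X * (a \<cdot>\<^sub>m 1\<^sub>m n) = a \<cdot>\<^sub>m X"
    using mult_smult_distrib[OF X one_carrier_mat] X by simp
  moreover have "X * (M * P) = (X * M) * P"
    using X M P by (simp add: assoc_mult_mat[of _ n n _ n _ n])
  ultimately have "X * (a \<cdot>\<^sub>m 1\<^sub>m n + M * P) = a \<cdot>\<^sub>m X + (X * M) * P"
    using mult_add_distrib_mat[OF X _ mult_carrier_mat[OF M P(1)]] by simp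
  also have "(X * M) * P = N * (X * P)"
    unfolding XM by (rule assoc_mult_mat[OF N X P(1)])
  also have "N * (X * P) = (N * P') * X"
    unfolding IH using X N P by (simp add: assoc_mult_mat[of _ n n _ n _ n])
  also have "a \<cdot>\<^sub>m X + (N * P') * X = (a \<cdot>\<^sub>m 1\<^sub>m n + N * P') * X"
    using X N P by (simp add: add_mult_distrib_mat[of _ n n] mult_smult_assoc_mat[of _ n n X n])
  finally show ?case
    using M N by (simp add: poly_mat_pCons P_def P'_def)
qed

lemma poly_mat_transpose:
  assumes M: "M \<in> carrier_mat n n"
  shows "transpose_mat (poly_mat p M) = poly_mat p (transpose_mat M)"
proof (induction p)
  case 0
  then show ?case using M by simp
next
  case (pCons a p)
  have MT: "transpose_mat M \<in> carrier_mat n n"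
    using M by simp
  have "transpose_mat (a \<cdot>\<^sub>m 1\<^sub>m n) = a \<cdot>\<^sub>m 1\<^sub>m n"
    by (auto intro!: eq_matI)
  then have "transpose_mat (poly_mat (pCons a p) M)
      = a \<cdot>\<^sub>m 1\<^sub>m n + transpose_mat (poly_mat p M) * transpose_mat M"
    using M by (simp add: poly_mat_pCons transpose_add[of _ n n] transpose_mult[of _ n n _ n])
  also have "transpose_mat (poly_mat p M) * transpose_mat M
      = transpose_mat M * poly_mat p (transpose_mat M)"
    unfolding pCons.IH using poly_mat_intertwine[OF MT MT MT refl] by simp
  finally show ?case
    using MT by (simp add: poly_mat_pCons)
qed

lemma (in comm_ring_hom) mat_hom_poly_mat:
  assumes M: "M \<in> carrier_mat n n"
  shows "mat\<^sub>h (poly_mat p M) = poly_mat (map_poly hom p) (mat\<^sub>h M)"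
proof (induction p)
  case 0
  then show ?case using M by (auto intro!: eq_matI)
next
  case (pCons a p)
  have "mat\<^sub>h (a \<cdot>\<^sub>m 1\<^sub>m n + M * poly_mat p M) = hom a \<cdot>\<^sub>m 1\<^sub>m n + mat\<^sub>h (M * poly_mat p M)"
    using M by (auto simp: hom_distribs intro!: eq_matI)
  also have "mat\<^sub>h (M * poly_mat p M) = mat\<^sub>h M * mat\<^sub>h (poly_mat p M)"
    by (rule mat_hom_mult[OF M poly_mat_carrier[OF M]])
  finally have "mat\<^sub>h (a \<cdot>\<^sub>m 1\<^sub>m n + M * poly_mat p M) = hom a \<cdot>\<^sub>m 1\<^sub>m n + mat\<^sub>h M * mat\<^sub>h (poly_mat p M)" .
  then show ?case
    using M pCons by (simp add: poly_mat_pCons map_poly_pCons_hom)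
qed

lemma similar_mat_wit_poly_mat:
  assumes A: "A \<in> carrier_mat n n" and sim: "similar_mat_wit A B P Q"
  shows "poly_mat p A = P * poly_mat p B * Q"
proof -
  note W = similar_mat_witD2[OF A sim]
  have B: "B \<in> carrier_mat n n" and P: "P \<in> carrier_mat n n" and Q: "Q \<in> carrier_mat n n"
    using W by auto
  have "Q * A = (Q * P) * B * Q"
    using P B Q by (subst W(3)) (simp add: assoc_mult_mat[of _ n n _ n _ n])
  then have "Q * A = B * Q"
    using B by (simp add: W(2))
  from poly_mat_intertwine[OF Q A B this]
  have "P * (Q * poly_mat p A) = P * (poly_mat p B * Q)"
    by simp
  then show ?thesis
    using A B P Q by (simp add: W(1) assoc_mult_mat[of _ n n _ n _ n, symmetric])
qed

lemma upper_triangular_poly_mat_diag: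
  assumes T: "T \<in> carrier_mat n n" and ut: "upper_triangular T"
  shows "poly_mat (\<Prod>i<n. [:- T $$ (i,i), 1:]) T = 0\<^sub>m n n"
proof -
  have "\<forall>i<n. \<forall>j<k. poly_mat (\<Prod>i<k. [:- T $$ (i,i), 1:]) T $$ (i,j) = 0" if "k \<le> n" for k
    using that
  proof (induction k)
    case 0
    then show ?case by simp
  next
    case (Suc k)
    define P where "P = poly_mat (\<Prod>i<k. [:- T $$ (i,i), 1:]) T"
    define L where "L = (- T $$ (k,k)) \<cdot>\<^sub>m 1\<^sub>m n + T"
    have P: "P \<in> carrier_mat n n" and L: "L \<in> carrier_mat n n"
      using T unfolding P_def L_def by auto
    have IH: "P $$ (i,l) = 0" if "i < n" "l < k" for i l
      using Suc that unfolding P_def by auto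
    have L_lower: "L $$ (l,j) = 0" if "l < n" "j < l" for l j
      using ut T that unfolding L_def by (auto intro: upper_triangularD)
    have L_kk: "L $$ (k,k) = 0"
      using T Suc(2) unfolding L_def by auto
    have "(P * L) $$ (i,j) = 0" if "i < n" "j < Suc k" for i j
    proof -
      have "P $$ (i,l) * L $$ (l,j) = 0" if "l < n" for l
        using IH[OF \<open>i < n\<close>] L_lower[OF that] L_kk \<open>j < Suc k\<close>
        by (cases "l < k"; cases "j < l") (auto simp: less_Suc_eq)
      then show ?thesis
        using P L that Suc(2) by (simp add: scalar_prod_def)
    qed
    moreover have "poly_mat (\<Prod>i<Suc k. [:- T $$ (i,i), 1:]) T = P * L"
      unfolding P_def L_def by (simp only: prod.lessThan_Suc poly_mat_mult[OF T] poly_mat_linear[OF T])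
    ultimately show ?case by simp
  qed
  from this[of n] show ?thesis
    using T by (intro eq_matI) auto
qed

lemma cayley_hamilton_factorized:
  fixes A :: "'a::conjugatable_ordered_field mat"
  assumes A: "A \<in> carrier_mat n n" and cp: "char_poly A = (\<Prod>e\<leftarrow>es. [:- e, 1:])"
  shows "poly_mat (char_poly A) A = 0\<^sub>m n n"
proof -
  obtain T P Q where "schur_decomposition A es = (T, P, Q)"
    by (cases "schur_decomposition A es")
  from schur_decomposition[OF A cp this]
  have sim: "similar_mat_wit A T P Q" and ut: "upper_triangular T" and diag: "diag_mat T = es"
    by auto
  note W = similar_mat_witD2[OF A sim]
  have T: "T \<in> carrier_mat n n"
    using W by auto
  have "char_poly A = (\<Prod>i<n. [:- T $$ (i,i), 1:])"
    using T unfolding cp diag[symmetric] diag_mat_def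
    by (simp add: prod.distinct_set_conv_list[symmetric] atLeast_upt)
  then have "poly_mat (char_poly A) A = P * poly_mat (\<Prod>i<n. [:- T $$ (i,i), 1:]) T * Q"
    using similar_mat_wit_poly_mat[OF A sim] by simp
  also have "\<dots> = 0\<^sub>m n n"
    using W by (simp add: upper_triangular_poly_mat_diag[OF T ut])
  finally show ?thesis .
qed

lemma cayley_hamilton_complex:
  fixes B :: "complex mat"
  assumes B: "B \<in> carrier_mat d d"
  shows "poly_mat (char_poly B) B = 0\<^sub>m d d"
  using char_poly_factorized[OF B] cayley_hamilton_factorized[OF B] by blast

section \<open>The class \<open>\<Omega>\<^sub>2\<^sub>n\<close>\<close>

lemma split_block_four_block_mat:
  assumes "A \<in> carrier_mat nr1 nc1" "B \<in> carrier_mat nr1 nc2"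
    "C \<in> carrier_mat nr2 nc1" "D \<in> carrier_mat nr2 nc2"
  shows "split_block (four_block_mat A B C D) nr1 nc1 = (A, B, C, D)"
  using assms unfolding split_block_def Let_def by (auto intro!: eq_matI)

definition J_mat :: "nat \<Rightarrow> complex mat" where
  "J_mat n = four_block_mat (0\<^sub>m n n) (1\<^sub>m n) (- 1\<^sub>m n) (0\<^sub>m n n)"

lemma J_mat_carrier: "J_mat n \<in> carrier_mat (2 * n) (2 * n)"
  unfolding J_mat_def mult_2 by (rule four_block_carrier_mat) auto

lemma four_block_mult_J_mat:
  assumes "A \<in> carrier_mat n n" "B \<in> carrier_mat n n" "C \<in> carrier_mat n n" "D \<in> carrier_mat n n"
  shows "four_block_mat A B C D * J_mat n = four_block_mat (- B) A (- D) C"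
  using assms unfolding J_mat_def by (subst mult_four_block_mat[of _ n n _ n _ n]) auto

lemma J_mat_mult_four_block:
  assumes "A \<in> carrier_mat n n" "B \<in> carrier_mat n n" "C \<in> carrier_mat n n" "D \<in> carrier_mat n n"
  shows "J_mat n * four_block_mat A B C D = four_block_mat C D (- A) (- B)"
  using assms unfolding J_mat_def by (subst mult_four_block_mat[of _ n n _ n _ n]) auto

lemma Omega_iff_J_mat:
  "M \<in> Omega n \<longleftrightarrow> M \<in> carrier_mat (2 * n) (2 * n) \<and> M * J_mat n = J_mat n * map_mat cnj M"
proof
  assume "M \<in> Omega n"
  then obtain A1 A2 where A: "A1 \<in> carrier_mat n n" "A2 \<in> carrier_mat n n"
    and M: "M = four_block_mat A1 (map_mat cnj A2) (- A2) (map_mat cnj A1)"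
    and "M \<in> carrier_mat (2 * n) (2 * n)"
    unfolding Omega_def by auto
  moreover have "map_mat cnj M = four_block_mat (map_mat cnj A1) A2 (- map_mat cnj A2) A1"
    unfolding M using A by (subst map_four_block_mat[of _ n n _ n _ n]) (auto intro!: eq_matI)
  ultimately show "M \<in> carrier_mat (2 * n) (2 * n) \<and> M * J_mat n = J_mat n * map_mat cnj M"
    by (simp add: four_block_mult_J_mat J_mat_mult_four_block)
next
  assume "M \<in> carrier_mat (2 * n) (2 * n) \<and> M * J_mat n = J_mat n * map_mat cnj M"
  then have M: "M \<in> carrier_mat (2 * n) (2 * n)" and MJ: "M * J_mat n = J_mat n * map_mat cnj M"
    by auto
  obtain M1 M2 M3 M4 where sp: "split_block M n n = (M1, M2, M3, M4)"
    by (cases "split_block M n n")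
  have "dim_row M = n + n" "dim_col M = n + n"
    using M by auto
  note S = split_block[OF sp this]
  have blocks: "- M2 \<in> carrier_mat n n" "- M4 \<in> carrier_mat n n"
    "map_mat cnj M3 \<in> carrier_mat n n" "map_mat cnj M4 \<in> carrier_mat n n"
    "- map_mat cnj M1 \<in> carrier_mat n n" "- map_mat cnj M2 \<in> carrier_mat n n"
    using S by auto
  have "four_block_mat (- M2) M1 (- M4) M3
      = four_block_mat (map_mat cnj M3) (map_mat cnj M4) (- map_mat cnj M1) (- map_mat cnj M2)"
    using MJ S by (simp add: four_block_mult_J_mat J_mat_mult_four_block map_four_block_mat[of _ n n _ n _ n])
  then have "split_block (four_block_mat (- M2) M1 (- M4) M3) n n
      = split_block (four_block_mat (map_mat cnj M3) (map_mat cnj M4)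
          (- map_mat cnj M1) (- map_mat cnj M2)) n n"
    by (rule arg_cong[where f = "\<lambda>X. split_block X n n"])
  then have "- M2 = map_mat cnj M3" "M1 = map_mat cnj M4"
    unfolding split_block_four_block_mat[OF blocks(1) S(1) blocks(2) S(3)]
      split_block_four_block_mat[OF blocks(3-6)]
    by (auto simp only: prod.inject)
  then have "M2 = map_mat cnj (- M3)" "M4 = map_mat cnj M1"
  proof -
    have "M2 = - (- M2)" "map_mat cnj (- M3) = - map_mat cnj M3"
      "map_mat cnj (map_mat cnj M4) = M4"
      using S by (auto intro!: eq_matI)
    then show "M2 = map_mat cnj (- M3)" "M4 = map_mat cnj M1"
      unfolding \<open>- M2 = map_mat cnj M3\<close> \<open>M1 = map_mat cnj M4\<close> by simp_all
  qed
  moreover have "M3 = - (- M3)"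
    using S by (auto intro!: eq_matI)
  ultimately have "M = four_block_mat M1 (map_mat cnj (- M3)) (- (- M3)) (map_mat cnj M1)"
    using S(5) by metis
  then show "M \<in> Omega n"
    unfolding Omega_def using M S(1) uminus_carrier_mat[OF S(3)] by blast
qed

section \<open>Real polynomial roots of matrices\<close>

lemma prod_list_dvd_power:
  fixes r :: "'a::comm_monoid_mult"
  assumes "\<forall>x\<in>set xs. x dvd r"
  shows "prod_list xs dvd r ^ length xs"
  using assms by (induction xs) (auto intro: mult_dvd_mono)

interpretation of_real_poly_hom: map_poly_inj_idom_hom complex_of_real ..

interpretation cnj_hom: comm_ring_hom cnj
  by unfold_locales auto

lemma char_poly_dvd_power_if_eigenvalue_factors:
  fixes B :: "complex mat"
  assumes B: "B \<in> carrier_mat d d" and r: "\<forall>e\<in>spectrum B. [:- e, 1:] dvd r"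
  shows "char_poly B dvd r ^ d"
proof -
  obtain es where cp: "char_poly B = (\<Prod>e\<leftarrow>es. [:- e, 1:])" and len: "length es = d"
    using char_poly_factorized[OF B] by blast
  have "e \<in> spectrum B" if "e \<in> set es" for e
    using that spectrum_root_char_poly[OF B] by (simp add: cp poly_prod_list prod_list_zero_iff)
  then show ?thesis
    unfolding cp len[symmetric] using r prod_list_dvd_power[of "map (\<lambda>e. [:- e, 1:]) es"] by auto
qed

lemma real_poly_mat_odd_root:
  fixes B :: "complex mat"
  assumes B: "B \<in> carrier_mat d d" and spec: "spectrum B \<subseteq> \<real> - {0}" and "odd m"
  shows "\<exists>p :: real poly. poly_mat (map_poly of_real p) B ^\<^sub>m m = B"
proof -
  define S where "S = Re ` spectrum B"
  have "finite S" "0 \<notin> S"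
    unfolding S_def using card_finite_spectrum(1)[OF B] spec by (auto elim!: Reals_cases)
  from real_poly_power_root_mod_power[OF this \<open>odd m\<close>]
  obtain p where "(\<Prod>x\<in>S. [:- x, 1:]) ^ d dvd p ^ m - [:0, 1:]"
    by blast
  then have "map_poly complex_of_real ((\<Prod>x\<in>S. [:- x, 1:]) ^ d) dvd map_poly of_real (p ^ m - [:0, 1:])"
    by (rule of_real_poly_hom.hom_dvd)
  then have "(\<Prod>x\<in>S. [:- complex_of_real x, 1:]) ^ d dvd map_poly of_real p ^ m - [:0, 1:]"
    by (simp add: of_real_poly_hom.hom_power of_real_poly_hom.hom_prod of_real_poly_hom.hom_minus)
  moreover have "char_poly B dvd (\<Prod>x\<in>S. [:- complex_of_real x, 1:]) ^ d"
  proof (intro char_poly_dvd_power_if_eigenvalue_factors[OF B] ballI)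
    fix e assume "e \<in> spectrum B"
    then have "e = of_real (Re e)" "Re e \<in> S"
      using spec unfolding S_def by (auto elim!: Reals_cases)
    then show "[:- e, 1:] dvd (\<Prod>x\<in>S. [:- complex_of_real x, 1:])"
      using \<open>finite S\<close> by (metis (no_types, lifting) dvd_prodI)
  qed
  ultimately have "char_poly B dvd map_poly of_real p ^ m - [:0, 1:]"
    using dvd_trans by blast
  then have zero: "poly_mat (map_poly of_real p ^ m - [:0, 1:]) B = 0\<^sub>m d d"
    by (rule poly_mat_dvd_eq_0[OF B cayley_hamilton_complex[OF B]])
  have "poly_mat (map_poly of_real p) B ^\<^sub>m m
      = poly_mat (map_poly of_real p ^ m - [:0, 1:]) B + poly_mat [:0, 1:] B"
    by (simp flip: poly_mat_power[OF B] poly_mat_add[OF B])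
  also have "\<dots> = B"
    unfolding zero poly_mat_linear[OF B] using B by (auto intro!: eq_matI)
  finally show ?thesis ..
qed

lemma Omega_poly_mat_of_real:
  assumes "B \<in> Omega n"
  shows "poly_mat (map_poly of_real p) B \<in> Omega n"
proof -
  have B: "B \<in> carrier_mat (2 * n) (2 * n)" and BJ: "J_mat n * map_mat cnj B = B * J_mat n"
    using assms unfolding Omega_iff_J_mat by auto
  have "map_mat cnj (poly_mat (map_poly of_real p) B) = poly_mat (map_poly of_real p) (map_mat cnj B)"
    using cnj_hom.mat_hom_poly_mat[OF B] by (simp add: map_poly_map_poly o_def)
  moreover have "J_mat n * poly_mat (map_poly of_real p) (map_mat cnj B)
      = poly_mat (map_poly of_real p) B * J_mat n"
    using B by (intro poly_mat_intertwine[OF J_mat_carrier _ B BJ]) auto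
  ultimately show ?thesis
    unfolding Omega_iff_J_mat using B by simp
qed

lemma mat_adjoint_eq_transpose_cnj: "mat_adjoint A = transpose_mat (map_mat cnj A)"
  unfolding mat_adjoint_def by (intro eq_matI) (auto simp: mat_of_rows_def)

lemma H_selfadjoint_poly_mat_of_real:
  assumes H: "H \<in> carrier_mat d d" and B: "B \<in> carrier_mat d d" and "H_selfadjoint H B"
  shows "H_selfadjoint H (poly_mat (map_poly of_real p) B)"
proof -
  have B': "mat_adjoint B \<in> carrier_mat d d"
    using B by (simp add: mat_adjoint_eq_transpose_cnj)
  have "mat_adjoint (poly_mat (map_poly of_real p) B) = poly_mat (map_poly of_real p) (mat_adjoint B)"
    using B cnj_hom.mat_hom_poly_mat[OF B]
    by (simp add: mat_adjoint_eq_transpose_cnj poly_mat_transpose map_poly_map_poly o_def)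
  then show ?thesis
    using \<open>H_selfadjoint H B\<close> poly_mat_intertwine[OF H B B']
    unfolding H_selfadjoint_def by simp
qed

theorem mainTheorem9:
  fixes n m :: nat and H B :: "complex mat"
  assumes "odd m"
    and "H \<in> Omega n" and "invertible_mat H" and "hermitian_mat H"
    and "B \<in> Omega n" and "H_selfadjoint H B"
    and "spectrum B \<subseteq> {z. z \<in> \<real> \<and> Re z < 0}"
  shows "\<exists>A \<in> Omega n. H_selfadjoint H A \<and> A ^\<^sub>m m = B"
proof -
  have H: "H \<in> carrier_mat (2 * n) (2 * n)" and B: "B \<in> carrier_mat (2 * n) (2 * n)"
    using assms(2,5) unfolding Omega_iff_J_mat by auto
  have "spectrum B \<subseteq> \<real> - {0}"
    using assms(7) by auto
  then obtain p where "poly_mat (map_poly of_real p) B ^\<^sub>m m = B"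
    using real_poly_mat_odd_root[OF B _ \<open>odd m\<close>] by blast
  then show ?thesis
    using Omega_poly_mat_of_real[OF assms(5)] H_selfadjoint_poly_mat_of_real[OF H B assms(6)]
    by blast
qed

end
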